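(* Assume the continuity assumption holds and let $\lambda^*$ be a minimizer of $\lambda\mapsto\sum_{s\in\{-1,1\}}\mathbb{E}[\max_{k\in[K]}(\pi_s p_k(X,s)-s\lambda_k)\mid S=s]$ over $\mathbb{R}^K$. Then any classifier $g$ satisfying $$g(x,s)\in\arg\max_{k\in[K]}\big(\pi_s p_k(x,s)-s\lambda^*_k\big)\quad\text{for all }(x,s)\in\mathcal{X}\times\{-1,1\}$$ is exactly fair and minimizes $\mathcal{R}$ over $\mathcal{G}_{\rm fair}$, i.e. it is an optimal exactly fair classifier.
   Context: $(X,S,Y)$ is a random triple with distribution $\mathbb{P}$, where $X\in\mathcal{X}\subset\mathbb{R}^d$, $S\in\{-1,1\}$ and $Y\in[K]=\{1,\dots,K\}$. Let $\pi_s=\mathbb{P}(S=s)$, assumed $>0$ for both $s$, and $p_k(x,s)=\mathbb{P}(Y=k\mid X=x,S=s)$. A classifier is a measurable map $g:\mathcal{X}\times\{-1,1\}\to[K]$; the risk is $\mathcal{R}(g)=\mathbb{P}(g(X,S)\neq Y)$. $g$ is exactly fair ($g\in\mathcal{G}_{\rm fair}$) if $\mathbb{P}(g(X,S)=k\mid S=1)=\mathbb{P}(g(X,S)=k\mid S=-1)$ for all $k\in[K]$. Continuity assumption: for all $k\neq j$ in $[K]$ and $s\in\{-1,1\}$, the map $t\mapsto\mathbb{P}(p_k(X,S)-p_j(X,S)\le t\mid S=s)$ is continuous. *)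

theory Defs
  imports "HOL-Probability.Probability"
begin

text \<open>Setup: a probability space M carrying random variables X (features, in a set Xs of real^'d),
S (sensitive attribute, in {-1,1}) and Y (label, in {1..K}).\<close>

definition pi_s :: "'a measure \<Rightarrow> ('a \<Rightarrow> int) \<Rightarrow> int \<Rightarrow> real" where
  "pi_s M S s = measure M {\<omega>\<in>space M. S \<omega> = s}"

definition cprob_S :: "'a measure \<Rightarrow> ('a \<Rightarrow> int) \<Rightarrow> int \<Rightarrow> ('a \<Rightarrow> bool) \<Rightarrow> real" where
  "cprob_S M S s P = measure M {\<omega>\<in>space M. P \<omega> \<and> S \<omega> = s} / pi_s M S s"

definition cexp_S :: "'a measure \<Rightarrow> ('a \<Rightarrow> int) \<Rightarrow> int \<Rightarrow> ('a \<Rightarrow> real) \<Rightarrow> real" where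
  "cexp_S M S s f = (\<integral>\<omega>. indicator {\<omega>\<in>space M. S \<omega> = s} \<omega> * f \<omega> \<partial>M) / pi_s M S s"

text \<open>p is a version of the regression functions p_k(x,s) = P(Y = k | X = x, S = s).\<close>
definition is_cond_prob_version ::
  "'a measure \<Rightarrow> ('a \<Rightarrow> real^'d) \<Rightarrow> ('a \<Rightarrow> int) \<Rightarrow> ('a \<Rightarrow> nat) \<Rightarrow> nat
     \<Rightarrow> (nat \<Rightarrow> real^'d \<Rightarrow> int \<Rightarrow> real) \<Rightarrow> bool" where
  "is_cond_prob_version M X S Y K p \<longleftrightarrow>
     (\<forall>k\<in>{1..K}. \<forall>s\<in>{-1,1}.
        (\<lambda>x. p k x s) \<in> borel_measurable borel \<and>
        (\<forall>x. 0 \<le> p k x s \<and> p k x s \<le> 1) \<and>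
        (\<forall>A\<in>sets borel.
           measure M {\<omega>\<in>space M. Y \<omega> = k \<and> S \<omega> = s \<and> X \<omega> \<in> A}
           = (\<integral>\<omega>. indicator {\<omega>\<in>space M. S \<omega> = s \<and> X \<omega> \<in> A} \<omega> * p k (X \<omega>) s \<partial>M)))"

definition is_classifier :: "(real^'d) set \<Rightarrow> nat \<Rightarrow> (real^'d \<Rightarrow> int \<Rightarrow> nat) \<Rightarrow> bool" where
  "is_classifier Xs K g \<longleftrightarrow>
     (\<forall>s\<in>{-1,1}. (\<lambda>x. g x s) \<in> restrict_space borel Xs \<rightarrow>\<^sub>M count_space UNIV) \<and>
     (\<forall>x\<in>Xs. \<forall>s\<in>{-1,1}. g x s \<in> {1..K})"

definition risk :: "'a measure \<Rightarrow> ('a \<Rightarrow> real^'d) \<Rightarrow> ('a \<Rightarrow> int) \<Rightarrow> ('a \<Rightarrow> nat)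
     \<Rightarrow> (real^'d \<Rightarrow> int \<Rightarrow> nat) \<Rightarrow> real" where
  "risk M X S Y g = measure M {\<omega>\<in>space M. g (X \<omega>) (S \<omega>) \<noteq> Y \<omega>}"

definition exactly_fair :: "'a measure \<Rightarrow> ('a \<Rightarrow> real^'d) \<Rightarrow> ('a \<Rightarrow> int) \<Rightarrow> nat
     \<Rightarrow> (real^'d \<Rightarrow> int \<Rightarrow> nat) \<Rightarrow> bool" where
  "exactly_fair M X S K g \<longleftrightarrow>
     (\<forall>k\<in>{1..K}. cprob_S M S 1 (\<lambda>\<omega>. g (X \<omega>) (S \<omega>) = k)
                = cprob_S M S (-1) (\<lambda>\<omega>. g (X \<omega>) (S \<omega>) = k))"

definition fair_objective :: "'a measure \<Rightarrow> ('a \<Rightarrow> real^'d) \<Rightarrow> ('a \<Rightarrow> int) \<Rightarrow> nat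
     \<Rightarrow> (nat \<Rightarrow> real^'d \<Rightarrow> int \<Rightarrow> real) \<Rightarrow> (nat \<Rightarrow> real) \<Rightarrow> real" where
  "fair_objective M X S K p lam =
     (\<Sum>s\<in>{-1,1::int}. cexp_S M S s
        (\<lambda>\<omega>. Max ((\<lambda>k. pi_s M S s * p k (X \<omega>) s - real_of_int s * lam k) ` {1..K})))"

end

theory Submission
  imports Defs
begin

(* Write score_s(k, x) = pi_s p_k(x, s) - s lambda_k. For any classifier h the conditional expectation
   of score_s(h) given S = s equals P(h(X, s) = Y, S = s) - s * sum_k lambda_k P(h = k | S = s).
   For an exactly fair h the lambda-terms of the two groups cancel, so the expected score summed over
   both groups is 1 - R(h); since g maximizes the score pointwise, R(g) <= R(h) for every fair h as
   soon as g is fair.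
   Fairness of g comes from the minimality of lambda*: shifting lambda*_k0 by t increases the dual
   objective by at most -t (P(g = k0 | S = 1) - P(g = k0 | S = -1)) plus |t| times the probability that
   two scores lie within |t| of each other. By the continuity assumption this probability tends to 0
   with t, so minimality forces the two conditional probabilities to agree. *)

lemma Max_add_le_near_tie:
  fixes a c :: "'i \<Rightarrow> real"
  assumes "finite I" "i \<in> I" "\<forall>j\<in>I. a j \<le> a i" "\<forall>j\<in>I. \<bar>c j - c i\<bar> \<le> r"
  shows "Max ((\<lambda>j. a j + c j) ` I) \<le> a i + c i + (if \<exists>j\<in>I. j \<noteq> i \<and> a i - a j < r then r else 0)"
proof -
  have "a j + c j \<le> a i + c i + (if \<exists>j\<in>I. j \<noteq> i \<and> a i - a j < r then r else 0)" if "j \<in> I" for j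
    using assms that by (cases "j = i") (fastforce simp: abs_le_iff)+
  then show ?thesis
    using assms(1,2) by (subst Max_le_iff) auto
qed

lemma (in finite_measure) measure_level_band_tendsto_0:
  fixes f :: "'a \<Rightarrow> real"
  assumes f: "f \<in> borel_measurable M" and A: "A \<in> sets M"
    and cont: "isCont (\<lambda>t. measure M {\<omega>\<in>A. f \<omega> \<le> t}) c"
  shows "((\<lambda>r. measure M {\<omega>\<in>A. \<bar>f \<omega> - c\<bar> < r}) \<longlongrightarrow> 0) (at_right 0)"
proof (rule tendsto_sandwich)
  define G where "G t = measure M {\<omega>\<in>A. f \<omega> \<le> t}" for t
  have sub_sets: "{\<omega>\<in>A. f \<omega> \<le> t} \<in> sets M" for t
  proof -
    have "{\<omega>\<in>A. f \<omega> \<le> t} = A \<inter> {\<omega>\<in>space M. f \<omega> \<le> t}"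
      using sets.sets_into_space[OF A] by auto
    then show ?thesis using A f by auto
  qed
  have band_le: "measure M {\<omega>\<in>A. \<bar>f \<omega> - c\<bar> < r} \<le> G (c + r) - G (c - r)" if "r > 0" for r
  proof -
    have "{\<omega>\<in>A. \<bar>f \<omega> - c\<bar> < r} \<subseteq> {\<omega>\<in>A. f \<omega> \<le> c + r} - {\<omega>\<in>A. f \<omega> \<le> c - r}"
      by auto
    then have "measure M {\<omega>\<in>A. \<bar>f \<omega> - c\<bar> < r} \<le> measure M ({\<omega>\<in>A. f \<omega> \<le> c + r} - {\<omega>\<in>A. f \<omega> \<le> c - r})"
      using sub_sets by (intro finite_measure_mono) auto
    also have "\<dots> = G (c + r) - G (c - r)"
      unfolding G_def using sub_sets that by (intro finite_measure_Diff) auto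
    finally show ?thesis .
  qed
  show "\<forall>\<^sub>F r in at_right 0. measure M {\<omega>\<in>A. \<bar>f \<omega> - c\<bar> < r} \<le> G (c + r) - G (c - r)"
    using eventually_at_right_less[of "0::real"] by eventually_elim (rule band_le)
  show "\<forall>\<^sub>F r in at_right 0. 0 \<le> measure M {\<omega>\<in>A. \<bar>f \<omega> - c\<bar> < r}"
    by simp
  show "((\<lambda>r. 0) \<longlongrightarrow> 0) (at_right 0)" by simp
  have "((\<lambda>r. c + r) \<longlongrightarrow> c) (at_right 0)" "((\<lambda>r. c - r) \<longlongrightarrow> c) (at_right 0)"
    by (auto intro!: tendsto_eq_intros)
  with cont have "((\<lambda>r. G (c + r) - G (c - r)) \<longlongrightarrow> G c - G c) (at_right 0)"
    unfolding G_def[abs_def] by (intro tendsto_diff isCont_tendsto_compose[OF cont])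
  then show "((\<lambda>r. G (c + r) - G (c - r)) \<longlongrightarrow> 0) (at_right 0)" by simp
qed

locale fair_classification = prob_space M
  for M :: "'a measure" +
  fixes X :: "'a \<Rightarrow> real^'d" and S :: "'a \<Rightarrow> int" and Y :: "'a \<Rightarrow> nat"
    and Xs :: "(real^'d) set" and K :: nat and p :: "nat \<Rightarrow> real^'d \<Rightarrow> int \<Rightarrow> real"
  assumes K_pos: "K \<ge> 1"
    and X_meas: "X \<in> borel_measurable M"
    and S_meas: "S \<in> M \<rightarrow>\<^sub>M count_space UNIV"
    and Y_meas: "Y \<in> M \<rightarrow>\<^sub>M count_space UNIV"
    and X_range: "\<forall>\<omega>\<in>space M. X \<omega> \<in> Xs"
    and S_range: "\<forall>\<omega>\<in>space M. S \<omega> \<in> {-1, 1}"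
    and Y_range: "\<forall>\<omega>\<in>space M. Y \<omega> \<in> {1..K}"
    and pi_pos: "\<forall>s\<in>{-1,1}. pi_s M S s > 0"
    and p_version: "is_cond_prob_version M X S Y K p"
begin

definition stratum :: "int \<Rightarrow> 'a set" where
  "stratum s = {\<omega>\<in>space M. S \<omega> = s}"

definition score :: "(nat \<Rightarrow> real) \<Rightarrow> int \<Rightarrow> nat \<Rightarrow> real^'d \<Rightarrow> real" where
  "score lam s k x = pi_s M S s * p k x s - real_of_int s * lam k"

definition assigned :: "(real^'d \<Rightarrow> int \<Rightarrow> nat) \<Rightarrow> int \<Rightarrow> nat \<Rightarrow> 'a set" where
  "assigned h s k = {\<omega>\<in>stratum s. h (X \<omega>) s = k}"

definition share :: "(real^'d \<Rightarrow> int \<Rightarrow> nat) \<Rightarrow> int \<Rightarrow> nat \<Rightarrow> real" where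
  "share h s k = prob (assigned h s k) / pi_s M S s"

definition hits :: "(real^'d \<Rightarrow> int \<Rightarrow> nat) \<Rightarrow> int \<Rightarrow> nat \<Rightarrow> real" where
  "hits h s k = prob {\<omega>\<in>assigned h s k. Y \<omega> = k}"

definition maximizes_score :: "(nat \<Rightarrow> real) \<Rightarrow> (real^'d \<Rightarrow> int \<Rightarrow> nat) \<Rightarrow> bool" where
  "maximizes_score lam h \<longleftrightarrow> (\<forall>x\<in>Xs. \<forall>s\<in>{-1,1}. \<forall>k\<in>{1..K}. score lam s k x \<le> score lam s (h x s) x)"

lemma sets_stratum [measurable]: "stratum s \<in> events"
proof -
  have "stratum s = S -` {s} \<inter> space M" by (auto simp: stratum_def)
  then show ?thesis using measurable_sets[OF S_meas] by simp
qed

lemma pi_s_eq_prob_stratum: "pi_s M S s = prob (stratum s)"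
  by (simp add: pi_s_def stratum_def)

lemma pi_s_pos: "s \<in> {-1,1} \<Longrightarrow> pi_s M S s > 0"
  using pi_pos by blast

lemma classifier_range:
  "is_classifier Xs K h \<Longrightarrow> s \<in> {-1,1} \<Longrightarrow> \<omega> \<in> space M \<Longrightarrow> h (X \<omega>) s \<in> {1..K}"
  using X_range unfolding is_classifier_def by blast

lemma classifier_measurable:
  assumes h: "is_classifier Xs K h" and s: "s \<in> {-1,1}"
  shows "(\<lambda>\<omega>. h (X \<omega>) s) \<in> M \<rightarrow>\<^sub>M count_space UNIV"
proof -
  have "X \<in> M \<rightarrow>\<^sub>M restrict_space borel Xs"
    using X_meas X_range by (intro measurable_restrict_space2) auto
  then show ?thesis
    using h s unfolding is_classifier_def by (auto intro: measurable_compose)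
qed

lemma classifier_measurable_range:
  assumes h: "is_classifier Xs K h" and s: "s \<in> {-1,1}"
  shows "(\<lambda>\<omega>. h (X \<omega>) s) \<in> M \<rightarrow>\<^sub>M count_space {1..K}"
  using classifier_measurable[OF h s] classifier_range[OF h s]
  by (auto simp: measurable_count_space_eq2_countable)

lemma assigned_subset_stratum: "assigned h s k \<subseteq> stratum s"
  by (auto simp: assigned_def)

lemma sets_assigned [measurable]:
  assumes "is_classifier Xs K h" "s \<in> {-1,1}"
  shows "assigned h s k \<in> events"
proof -
  have "assigned h s k = stratum s \<inter> ((\<lambda>\<omega>. h (X \<omega>) s) -` {k} \<inter> space M)"
    by (auto simp: assigned_def stratum_def)
  then show ?thesis using measurable_sets[OF classifier_measurable[OF assms]] by simp
qed

lemma assigned_eq_preimage: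
  assumes h: "is_classifier Xs K h" and s: "s \<in> {-1,1}"
  obtains B where "B \<in> sets borel" "assigned h s k = {\<omega>\<in>space M. S \<omega> = s \<and> X \<omega> \<in> B}"
proof -
  have "(\<lambda>x. h x s) -` {k} \<inter> space (restrict_space borel Xs) \<in> sets (restrict_space borel Xs)"
    using h s unfolding is_classifier_def by (intro measurable_sets) auto
  then obtain B where B: "B \<in> sets borel" "(\<lambda>x. h x s) -` {k} \<inter> Xs = Xs \<inter> B"
    by (auto simp: sets_restrict_space space_restrict_space)
  have "assigned h s k = {\<omega>\<in>space M. S \<omega> = s \<and> X \<omega> \<in> B}"
    using X_range B(2) by (auto simp: assigned_def stratum_def)
  with B(1) show thesis by (rule that)
qed

lemma exactly_fair_iff_share:
  "exactly_fair M X S K h \<longleftrightarrow> (\<forall>k\<in>{1..K}. share h 1 k = share h (-1) k)"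
proof -
  have "{\<omega>\<in>space M. h (X \<omega>) (S \<omega>) = k \<and> S \<omega> = s} = assigned h s k" for s k
    by (auto simp: assigned_def stratum_def)
  then have "cprob_S M S s (\<lambda>\<omega>. h (X \<omega>) (S \<omega>) = k) = share h s k" for s k
    by (simp add: cprob_S_def share_def)
  then show ?thesis by (simp add: exactly_fair_def)
qed

lemma p_measurable [measurable]:
  "k \<in> {1..K} \<Longrightarrow> s \<in> {-1,1} \<Longrightarrow> (\<lambda>\<omega>. p k (X \<omega>) s) \<in> borel_measurable M"
  using p_version X_meas unfolding is_cond_prob_version_def by (auto intro: measurable_compose)

lemma p_bounds: "k \<in> {1..K} \<Longrightarrow> s \<in> {-1,1} \<Longrightarrow> 0 \<le> p k x s \<and> p k x s \<le> 1"
  using p_version unfolding is_cond_prob_version_def by blast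

lemma prob_label_eq_integral_p:
  "k \<in> {1..K} \<Longrightarrow> s \<in> {-1,1} \<Longrightarrow> B \<in> sets borel \<Longrightarrow>
    prob {\<omega>\<in>space M. Y \<omega> = k \<and> S \<omega> = s \<and> X \<omega> \<in> B}
    = (\<integral>\<omega>. indicator {\<omega>\<in>space M. S \<omega> = s \<and> X \<omega> \<in> B} \<omega> * p k (X \<omega>) s \<partial>M)"
  using p_version unfolding is_cond_prob_version_def by blast

lemma score_measurable [measurable]:
  "k \<in> {1..K} \<Longrightarrow> s \<in> {-1,1} \<Longrightarrow> (\<lambda>\<omega>. score lam s k (X \<omega>)) \<in> borel_measurable M"
  unfolding score_def by measurable

lemma abs_score_le:
  assumes k: "k \<in> {1..K}" and s: "s \<in> {-1,1}"
  shows "\<bar>score lam s k x\<bar> \<le> 1 + (\<Sum>j\<in>{1..K}. \<bar>lam j\<bar>)"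
proof -
  have "0 \<le> p k x s" "p k x s \<le> 1"
    using p_bounds[OF k s] by auto
  moreover have "0 \<le> pi_s M S s" "pi_s M S s \<le> 1"
    using pi_s_pos[OF s] by (auto simp: pi_s_eq_prob_stratum)
  ultimately have "\<bar>pi_s M S s * p k x s\<bar> \<le> 1"
    by (simp add: abs_mult mult_le_one)
  moreover have "\<bar>lam k\<bar> \<le> (\<Sum>j\<in>{1..K}. \<bar>lam j\<bar>)"
    using k by (intro member_le_sum) auto
  then have "\<bar>real_of_int s * lam k\<bar> \<le> (\<Sum>j\<in>{1..K}. \<bar>lam j\<bar>)"
    using s by (auto simp: abs_mult)
  ultimately show ?thesis
    unfolding score_def by linarith
qed

lemma integrable_bounded:
  fixes f :: "'a \<Rightarrow> real"
  assumes "f \<in> borel_measurable M" "\<And>\<omega>. \<omega> \<in> space M \<Longrightarrow> \<bar>f \<omega>\<bar> \<le> B"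
  shows "integrable M f"
  using assms by (intro integrable_const_bound[where B=B] AE_I2) auto

lemma integrable_indicator_events: "A \<in> events \<Longrightarrow> integrable M (indicator A :: 'a \<Rightarrow> real)"
  by (intro integrable_real_indicator) (auto simp: less_top[symmetric])

lemma integrable_score_classifier:
  assumes h: "is_classifier Xs K h" and s: "s \<in> {-1,1}"
  shows "integrable M (\<lambda>\<omega>. score lam s (h (X \<omega>) s) (X \<omega>))"
proof (rule integrable_bounded)
  show "(\<lambda>\<omega>. score lam s (h (X \<omega>) s) (X \<omega>)) \<in> borel_measurable M"
    using score_measurable[OF _ s, of _ lam] classifier_measurable_range[OF h s]
    by (rule measurable_compose_countable') auto
  show "\<bar>score lam s (h (X \<omega>) s) (X \<omega>)\<bar> \<le> 1 + (\<Sum>j\<in>{1..K}. \<bar>lam j\<bar>)" if "\<omega> \<in> space M" for \<omega>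
    using abs_score_le classifier_range[OF h s that] s by blast
qed

lemma cexp_S_cong:
  "(\<And>\<omega>. \<omega> \<in> stratum s \<Longrightarrow> f \<omega> = g \<omega>) \<Longrightarrow> cexp_S M S s f = cexp_S M S s g"
  unfolding cexp_S_def stratum_def[symmetric]
  by (intro arg_cong[where f="\<lambda>x. x / pi_s M S s"] Bochner_Integration.integral_cong)
     (auto simp: indicator_def)

lemma cexp_S_sum:
  assumes "finite I" "\<And>i. i \<in> I \<Longrightarrow> integrable M (f i)"
  shows "cexp_S M S s (\<lambda>\<omega>. \<Sum>i\<in>I. f i \<omega>) = (\<Sum>i\<in>I. cexp_S M S s (f i))"
proof -
  have "(\<integral>\<omega>. indicator (stratum s) \<omega> * (\<Sum>i\<in>I. f i \<omega>) \<partial>M)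
      = (\<integral>\<omega>. (\<Sum>i\<in>I. f i \<omega> * indicator (stratum s) \<omega>) \<partial>M)"
    by (simp add: sum_distrib_right mult.commute)
  also have "\<dots> = (\<Sum>i\<in>I. \<integral>\<omega>. f i \<omega> * indicator (stratum s) \<omega> \<partial>M)"
    using assms by (intro Bochner_Integration.integral_sum integrable_real_mult_indicator) auto
  finally show ?thesis
    unfolding cexp_S_def stratum_def[symmetric] by (simp add: sum_divide_distrib mult.commute)
qed

lemma cexp_S_add:
  "integrable M f \<Longrightarrow> integrable M g \<Longrightarrow>
    cexp_S M S s (\<lambda>\<omega>. f \<omega> + g \<omega>) = cexp_S M S s f + cexp_S M S s g"
  using cexp_S_sum[of "{True, False}" "\<lambda>b. if b then f else g" s] by simp

lemma cexp_S_mono: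
  assumes s: "s \<in> {-1,1}" and "integrable M f" "integrable M g"
    and le: "\<And>\<omega>. \<omega> \<in> stratum s \<Longrightarrow> f \<omega> \<le> g \<omega>"
  shows "cexp_S M S s f \<le> cexp_S M S s g"
  unfolding cexp_S_def stratum_def[symmetric]
proof (rule divide_right_mono)
  show "(\<integral>\<omega>. indicator (stratum s) \<omega> * f \<omega> \<partial>M) \<le> (\<integral>\<omega>. indicator (stratum s) \<omega> * g \<omega> \<partial>M)"
    using assms integrable_real_mult_indicator[OF sets_stratum]
    by (intro integral_mono) (auto simp: indicator_def mult.commute)
  show "0 \<le> pi_s M S s"
    using pi_s_pos[OF s] by simp
qed

lemma cexp_S_indicator_mult:
  assumes "A \<subseteq> stratum s"
  shows "cexp_S M S s (\<lambda>\<omega>. indicator A \<omega> * f \<omega>) = (\<integral>\<omega>. indicator A \<omega> * f \<omega> \<partial>M) / pi_s M S s"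
  unfolding cexp_S_def stratum_def[symmetric]
  using assms by (intro arg_cong[where f="\<lambda>x. x / pi_s M S s"] Bochner_Integration.integral_cong)
     (auto simp: indicator_def)

lemma cexp_S_scaled_indicator:
  assumes "A \<in> events" "A \<subseteq> stratum s"
  shows "cexp_S M S s (\<lambda>\<omega>. c * indicator A \<omega>) = c * prob A / pi_s M S s"
  using cexp_S_indicator_mult[OF assms(2), of "\<lambda>_. c"] assms(1)
  by (simp add: mult.commute)

lemma integral_assigned_p:
  assumes h: "is_classifier Xs K h" and s: "s \<in> {-1,1}" and k: "k \<in> {1..K}"
  shows "(\<integral>\<omega>. indicator (assigned h s k) \<omega> * p k (X \<omega>) s \<partial>M) = hits h s k"
proof -
  obtain B where B: "B \<in> sets borel" "assigned h s k = {\<omega>\<in>space M. S \<omega> = s \<and> X \<omega> \<in> B}"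
    using assigned_eq_preimage[OF h s] .
  then have "{\<omega>\<in>assigned h s k. Y \<omega> = k} = {\<omega>\<in>space M. Y \<omega> = k \<and> S \<omega> = s \<and> X \<omega> \<in> B}"
    by auto
  then show ?thesis
    using prob_label_eq_integral_p[OF k s B(1)] B(2) by (simp add: hits_def)
qed

lemma cexp_assigned_score:
  assumes h: "is_classifier Xs K h" and s: "s \<in> {-1,1}" and k: "k \<in> {1..K}"
  shows "cexp_S M S s (\<lambda>\<omega>. indicator (assigned h s k) \<omega> * score lam s k (X \<omega>))
    = hits h s k - real_of_int s * lam k * share h s k"
proof -
  let ?A = "assigned h s k"
  have "(\<integral>\<omega>. indicator ?A \<omega> * score lam s k (X \<omega>) \<partial>M)
      = (\<integral>\<omega>. pi_s M S s * (indicator ?A \<omega> * p k (X \<omega>) s) - real_of_int s * lam k * indicator ?A \<omega> \<partial>M)"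
    by (simp add: score_def algebra_simps)
  also have "\<dots> = pi_s M S s * hits h s k - real_of_int s * lam k * prob ?A"
  proof -
    have "integrable M (\<lambda>\<omega>. indicator ?A \<omega> * p k (X \<omega>) s)"
      using p_bounds[OF k s] sets_assigned[OF h s] p_measurable[OF k s]
      by (intro integrable_bounded[where B=1]) (auto simp: indicator_def)
    moreover have "integrable M (indicator ?A :: 'a \<Rightarrow> real)"
      using sets_assigned[OF h s] by (rule integrable_indicator_events)
    moreover have "?A \<inter> space M = ?A"
      by (auto simp: assigned_def stratum_def)
    ultimately show ?thesis
      using integral_assigned_p[OF h s k] by simp
  qed
  finally show ?thesis
    using pi_s_pos[OF s] cexp_S_indicator_mult[of ?A s]
    by (simp add: assigned_def share_def field_simps)
qed

lemma score_classifier_eq_sum: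
  assumes h: "is_classifier Xs K h" and s: "s \<in> {-1,1}" and \<omega>: "\<omega> \<in> stratum s"
  shows "score lam s (h (X \<omega>) s) (X \<omega>) = (\<Sum>k\<in>{1..K}. indicator (assigned h s k) \<omega> * score lam s k (X \<omega>))"
proof -
  have "h (X \<omega>) s \<in> {1..K}"
    using classifier_range[OF h s] \<omega> by (auto simp: stratum_def)
  moreover have "(\<Sum>k\<in>{1..K}. indicator (assigned h s k) \<omega> * score lam s k (X \<omega>))
      = (\<Sum>k\<in>{1..K}. if h (X \<omega>) s = k then score lam s k (X \<omega>) else 0)"
    using \<omega> by (intro sum.cong) (auto simp: assigned_def indicator_def)
  ultimately show ?thesis
    by (simp add: sum.delta)
qed

lemma cexp_score_classifier:
  assumes h: "is_classifier Xs K h" and s: "s \<in> {-1,1}"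
  shows "cexp_S M S s (\<lambda>\<omega>. score lam s (h (X \<omega>) s) (X \<omega>))
    = (\<Sum>k\<in>{1..K}. hits h s k) - real_of_int s * (\<Sum>k\<in>{1..K}. lam k * share h s k)"
proof -
  have "cexp_S M S s (\<lambda>\<omega>. score lam s (h (X \<omega>) s) (X \<omega>))
      = cexp_S M S s (\<lambda>\<omega>. \<Sum>k\<in>{1..K}. indicator (assigned h s k) \<omega> * score lam s k (X \<omega>))"
    using score_classifier_eq_sum[OF h s] by (rule cexp_S_cong)
  also have "\<dots> = (\<Sum>k\<in>{1..K}. cexp_S M S s (\<lambda>\<omega>. indicator (assigned h s k) \<omega> * score lam s k (X \<omega>)))"
  proof (rule cexp_S_sum)
    show "integrable M (\<lambda>\<omega>. indicator (assigned h s k) \<omega> * score lam s k (X \<omega>))"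
      if "k \<in> {1..K}" for k
      using that s sets_assigned[OF h s] abs_score_le[OF that s]
      by (intro integrable_bounded[where B="1 + (\<Sum>j\<in>{1..K}. \<bar>lam j\<bar>)"])
         (auto simp: indicator_def)
  qed simp
  also have "\<dots> = (\<Sum>k\<in>{1..K}. hits h s k - real_of_int s * lam k * share h s k)"
    using cexp_assigned_score[OF h s] by simp
  finally show ?thesis
    by (simp add: sum_subtractf sum_distrib_left mult.assoc)
qed

lemma risk_eq_1_minus_hits:
  assumes h: "is_classifier Xs K h"
  shows "risk M X S Y h = 1 - (\<Sum>s\<in>{-1,1}. \<Sum>k\<in>{1..K}. hits h s k)"
proof -
  let ?C = "\<lambda>(s, k). {\<omega>\<in>assigned h s k. Y \<omega> = k}"
  have C_sets: "?C ` ({-1,1} \<times> {1..K}) \<subseteq> events"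
  proof -
    have "{\<omega>\<in>assigned h s k. Y \<omega> = k} = assigned h s k \<inter> (Y -` {k} \<inter> space M)" for s k
      by (auto simp: assigned_def stratum_def)
    then show ?thesis
      using sets_assigned[OF h] measurable_sets[OF Y_meas] by auto
  qed
  have correct: "{\<omega>\<in>space M. h (X \<omega>) (S \<omega>) = Y \<omega>} = (\<Union>i\<in>{-1,1} \<times> {1..K}. ?C i)"
    using S_range Y_range by (auto simp: assigned_def stratum_def)
  have "disjoint_family_on ?C ({-1,1} \<times> {1..K})"
    by (auto simp: disjoint_family_on_def assigned_def stratum_def)
  then have "prob {\<omega>\<in>space M. h (X \<omega>) (S \<omega>) = Y \<omega>} = (\<Sum>s\<in>{-1,1}. \<Sum>k\<in>{1..K}. hits h s k)"
    unfolding correct using C_sets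
    by (simp add: finite_measure_finite_Union sum.cartesian_product hits_def split_beta')
  moreover have "{\<omega>\<in>space M. h (X \<omega>) (S \<omega>) \<noteq> Y \<omega>} = space M - {\<omega>\<in>space M. h (X \<omega>) (S \<omega>) = Y \<omega>}"
    by auto
  ultimately show ?thesis
    using C_sets unfolding risk_def correct by (simp add: prob_compl sets.finite_UN)
qed

lemma fair_classifier_value:
  assumes h: "is_classifier Xs K h" and fair: "exactly_fair M X S K h"
  shows "(\<Sum>s\<in>{-1,1}. cexp_S M S s (\<lambda>\<omega>. score lam s (h (X \<omega>) s) (X \<omega>))) = 1 - risk M X S Y h"
proof -
  have "(\<Sum>k\<in>{1..K}. lam k * share h 1 k) = (\<Sum>k\<in>{1..K}. lam k * share h (-1) k)"
    using fair by (simp add: exactly_fair_iff_share)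
  then show ?thesis
    using cexp_score_classifier[OF h] risk_eq_1_minus_hits[OF h] by simp
qed

lemma risk_le_if_maximizes_score:
  assumes g: "is_classifier Xs K g" "exactly_fair M X S K g" "maximizes_score lam g"
    and h: "is_classifier Xs K h" "exactly_fair M X S K h"
  shows "risk M X S Y g \<le> risk M X S Y h"
proof -
  have "cexp_S M S s (\<lambda>\<omega>. score lam s (h (X \<omega>) s) (X \<omega>))
      \<le> cexp_S M S s (\<lambda>\<omega>. score lam s (g (X \<omega>) s) (X \<omega>))" if s: "s \<in> {-1,1}" for s
  proof (rule cexp_S_mono[OF s integrable_score_classifier[OF h(1) s] integrable_score_classifier[OF g(1) s]])
    fix \<omega> assume "\<omega> \<in> stratum s"
    then show "score lam s (h (X \<omega>) s) (X \<omega>) \<le> score lam s (g (X \<omega>) s) (X \<omega>)"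
      using g(3) s X_range classifier_range[OF h(1) s] unfolding maximizes_score_def stratum_def by blast
  qed
  then have "1 - risk M X S Y h \<le> 1 - risk M X S Y g"
    unfolding fair_classifier_value[OF h, of lam, symmetric] fair_classifier_value[OF g(1,2), of lam, symmetric]
    by (intro sum_mono) auto
  then show ?thesis by simp
qed

definition near_tie :: "(nat \<Rightarrow> real) \<Rightarrow> int \<Rightarrow> real \<Rightarrow> 'a set" where
  "near_tie lam s r = {\<omega>\<in>stratum s. \<exists>i\<in>{1..K}. \<exists>j\<in>{1..K}. i \<noteq> j \<and> \<bar>score lam s i (X \<omega>) - score lam s j (X \<omega>)\<bar> < r}"

lemma sets_score_gap:
  assumes "i \<in> {1..K}" "j \<in> {1..K}" "s \<in> {-1,1}"
  shows "{\<omega>\<in>stratum s. \<bar>score lam s i (X \<omega>) - score lam s j (X \<omega>)\<bar> < r} \<in> events"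
proof -
  have "{\<omega>\<in>stratum s. \<bar>score lam s i (X \<omega>) - score lam s j (X \<omega>)\<bar> < r}
      = stratum s \<inter> {\<omega>\<in>space M. \<bar>score lam s i (X \<omega>) - score lam s j (X \<omega>)\<bar> < r}"
    by (auto simp: stratum_def)
  then show ?thesis using assms by simp
qed

lemma score_gap_tendsto_0:
  assumes s: "s \<in> {-1,1}" and i: "i \<in> {1..K}" and j: "j \<in> {1..K}"
    and cont: "continuous_on UNIV (\<lambda>t. cprob_S M S s (\<lambda>\<omega>. p i (X \<omega>) (S \<omega>) - p j (X \<omega>) (S \<omega>) \<le> t))"
  shows "((\<lambda>r. prob {\<omega>\<in>stratum s. \<bar>score lam s i (X \<omega>) - score lam s j (X \<omega>)\<bar> < r}) \<longlongrightarrow> 0) (at_right 0)"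
proof -
  let ?\<pi> = "pi_s M S s"
  let ?F = "\<lambda>t. cprob_S M S s (\<lambda>\<omega>. p i (X \<omega>) (S \<omega>) - p j (X \<omega>) (S \<omega>) \<le> t)"
  define f where "f \<omega> = score lam s i (X \<omega>) - score lam s j (X \<omega>)" for \<omega>
  define a where "a = real_of_int s * (lam i - lam j)"
  have \<pi>: "?\<pi> > 0" using pi_s_pos[OF s] .
  have cdf: "prob {\<omega>\<in>stratum s. f \<omega> \<le> t} = ?\<pi> * ?F ((t + a) / ?\<pi>)" for t
  proof -
    have "f \<omega> = ?\<pi> * (p i (X \<omega>) s - p j (X \<omega>) s) - a" for \<omega>
      by (simp add: f_def a_def score_def algebra_simps)
    then have "f \<omega> \<le> t \<longleftrightarrow> p i (X \<omega>) s - p j (X \<omega>) s \<le> (t + a) / ?\<pi>" for \<omega>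
      by (subst pos_le_divide_eq[OF \<pi>]) (auto simp: mult.commute)
    then have "{\<omega>\<in>stratum s. f \<omega> \<le> t}
        = {\<omega>\<in>space M. (p i (X \<omega>) (S \<omega>) - p j (X \<omega>) (S \<omega>) \<le> (t + a) / ?\<pi>) \<and> S \<omega> = s}"
      by (auto simp: stratum_def)
    then show ?thesis using \<pi> by (simp add: cprob_S_def)
  qed
  have F_cont: "isCont ?F ((0 + a) / ?\<pi>)"
    using cont by (simp add: continuous_on_eq_continuous_at)
  have "isCont (\<lambda>t. (t + a) / ?\<pi>) 0"
    using \<pi> by (intro continuous_intros) auto
  from isCont_o2[OF this F_cont] have "isCont (\<lambda>t. ?F ((t + a) / ?\<pi>)) 0" .
  then have "isCont (\<lambda>t. ?\<pi> * ?F ((t + a) / ?\<pi>)) 0"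
    by (rule isCont_mult[OF continuous_const])
  then have "isCont (\<lambda>t. prob {\<omega>\<in>stratum s. f \<omega> \<le> t}) 0"
    unfolding cdf .
  moreover have "f \<in> borel_measurable M"
    using i j s unfolding f_def by simp
  ultimately have "((\<lambda>r. prob {\<omega>\<in>stratum s. \<bar>f \<omega> - 0\<bar> < r}) \<longlongrightarrow> 0) (at_right 0)"
    by (intro measure_level_band_tendsto_0 sets_stratum)
  then show ?thesis
    by (simp add: f_def)
qed

lemma sets_near_tie [measurable]:
  assumes "s \<in> {-1,1}"
  shows "near_tie lam s r \<in> events"
proof -
  have "near_tie lam s r = (\<Union>(i, j)\<in>{1..K} \<times> {1..K} - Id.
      {\<omega>\<in>stratum s. \<bar>score lam s i (X \<omega>) - score lam s j (X \<omega>)\<bar> < r})"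
    by (auto simp: near_tie_def)
  then show ?thesis
    using sets_score_gap assms by auto
qed

lemma near_tie_subset_stratum: "near_tie lam s r \<subseteq> stratum s"
  by (auto simp: near_tie_def)

lemma near_tie_tendsto_0:
  assumes s: "s \<in> {-1,1}"
    and cont: "\<forall>i\<in>{1..K}. \<forall>j\<in>{1..K}. i \<noteq> j \<longrightarrow>
      continuous_on UNIV (\<lambda>t. cprob_S M S s (\<lambda>\<omega>. p i (X \<omega>) (S \<omega>) - p j (X \<omega>) (S \<omega>) \<le> t))"
  shows "((\<lambda>r. prob (near_tie lam s r)) \<longlongrightarrow> 0) (at_right 0)"
proof -
  let ?P = "{1..K} \<times> {1..K} - Id"
  define G where "G q r = {\<omega>\<in>stratum s. \<bar>score lam s (fst q) (X \<omega>) - score lam s (snd q) (X \<omega>)\<bar> < r}" for q r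
  have bound: "prob (near_tie lam s r) \<le> (\<Sum>q\<in>?P. prob (G q r))" for r
  proof -
    have "near_tie lam s r = (\<Union>q\<in>?P. G q r)"
      by (force simp: near_tie_def G_def)
    moreover have "(\<lambda>q. G q r) ` ?P \<subseteq> events"
      using sets_score_gap[OF _ _ s] by (auto simp: G_def)
    ultimately show ?thesis
      by (simp add: finite_measure_subadditive_finite)
  qed
  have lim: "((\<lambda>r. \<Sum>q\<in>?P. prob (G q r)) \<longlongrightarrow> 0) (at_right 0)"
  proof (intro tendsto_null_sum)
    fix q assume "q \<in> ?P"
    then show "((\<lambda>r. prob (G q r)) \<longlongrightarrow> 0) (at_right 0)"
      using score_gap_tendsto_0[OF s] cont unfolding G_def by (cases q) auto
  qed
  have "\<forall>\<^sub>F r in at_right 0. prob (near_tie lam s r) \<le> (\<Sum>q\<in>?P. prob (G q r))"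
    by (intro always_eventually allI bound)
  then show ?thesis
    by (rule tendsto_sandwich[OF always_eventually[OF allI[OF measure_nonneg]] _ tendsto_const lim])
qed

lemma integrable_Max_score:
  assumes s: "s \<in> {-1,1}"
  shows "integrable M (\<lambda>\<omega>. Max ((\<lambda>k. score lam s k (X \<omega>)) ` {1..K}))"
proof (rule integrable_bounded)
  show "(\<lambda>\<omega>. Max ((\<lambda>k. score lam s k (X \<omega>)) ` {1..K})) \<in> borel_measurable M"
    using s by (intro borel_measurable_Max) auto
  fix \<omega>
  obtain k where "k \<in> {1..K}" "Max ((\<lambda>k. score lam s k (X \<omega>)) ` {1..K}) = score lam s k (X \<omega>)"
    using Max_in[of "(\<lambda>k. score lam s k (X \<omega>)) ` {1..K}"] K_pos by fastforce
  then show "\<bar>Max ((\<lambda>k. score lam s k (X \<omega>)) ` {1..K})\<bar> \<le> 1 + (\<Sum>j\<in>{1..K}. \<bar>lam j\<bar>)"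
    using abs_score_le[OF _ s] by simp
qed

lemma Max_score_eq_classifier:
  assumes "maximizes_score lam g" "is_classifier Xs K g" "s \<in> {-1,1}" "\<omega> \<in> space M"
  shows "Max ((\<lambda>k. score lam s k (X \<omega>)) ` {1..K}) = score lam s (g (X \<omega>) s) (X \<omega>)"
  using assms X_range classifier_range[OF assms(2-4)]
  by (intro Max_eqI) (auto simp: maximizes_score_def)

lemma fair_objective_eq_classifier:
  assumes "maximizes_score lam g" "is_classifier Xs K g"
  shows "fair_objective M X S K p lam = (\<Sum>s\<in>{-1,1}. cexp_S M S s (\<lambda>\<omega>. score lam s (g (X \<omega>) s) (X \<omega>)))"
proof -
  have "cexp_S M S s (\<lambda>\<omega>. Max ((\<lambda>k. score lam s k (X \<omega>)) ` {1..K}))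
      = cexp_S M S s (\<lambda>\<omega>. score lam s (g (X \<omega>) s) (X \<omega>))" if "s \<in> {-1,1}" for s
    using Max_score_eq_classifier[OF assms that] by (intro cexp_S_cong) (auto simp: stratum_def)
  then show ?thesis
    by (simp add: fair_objective_def score_def)
qed

lemma Max_score_shift_le:
  assumes g: "maximizes_score lam g" "is_classifier Xs K g" and s: "s \<in> {-1,1}" and \<omega>: "\<omega> \<in> stratum s"
  shows "Max ((\<lambda>k. score (lam(k0 := lam k0 + t)) s k (X \<omega>)) ` {1..K})
    \<le> score lam s (g (X \<omega>) s) (X \<omega>) + (- real_of_int s * t) * indicator (assigned g s k0) \<omega>
      + \<bar>t\<bar> * indicator (near_tie lam s \<bar>t\<bar>) \<omega>"
proof -
  let ?i = "g (X \<omega>) s"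
  define a where "a k = score lam s k (X \<omega>)" for k
  define c where "c k = (if k = k0 then - real_of_int s * t else 0)" for k
  have \<omega>_space: "\<omega> \<in> space M" using \<omega> by (simp add: stratum_def)
  have i: "?i \<in> {1..K}" using classifier_range[OF g(2) s \<omega>_space] .
  have a_max: "\<forall>j\<in>{1..K}. a j \<le> a ?i"
    using g(1) s X_range \<omega>_space unfolding maximizes_score_def a_def by blast
  have c_close: "\<forall>j\<in>{1..K}. \<bar>c j - c ?i\<bar> \<le> \<bar>t\<bar>"
    using s by (auto simp: c_def abs_mult)
  have shifted: "score (lam(k0 := lam k0 + t)) s k (X \<omega>) = a k + c k" for k
    by (simp add: a_def c_def score_def algebra_simps)
  have tie: "(if \<exists>j\<in>{1..K}. j \<noteq> ?i \<and> a ?i - a j < \<bar>t\<bar> then \<bar>t\<bar> else 0)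
      \<le> \<bar>t\<bar> * indicator (near_tie lam s \<bar>t\<bar>) \<omega>"
  proof -
    have "\<omega> \<in> near_tie lam s \<bar>t\<bar>" if "j \<in> {1..K}" "j \<noteq> ?i" "a ?i - a j < \<bar>t\<bar>" for j
      using that i a_max \<omega> unfolding near_tie_def a_def by force
    then show ?thesis by auto
  qed
  have "indicator (assigned g s k0) \<omega> = (if ?i = k0 then 1 else 0 :: real)"
    using \<omega> by (simp add: assigned_def indicator_def)
  then have "a ?i + c ?i = score lam s ?i (X \<omega>) + (- real_of_int s * t) * indicator (assigned g s k0) \<omega>"
    by (simp add: a_def c_def)
  then show ?thesis
    using Max_add_le_near_tie[OF _ i a_max c_close] tie unfolding shifted by simp
qed

lemma cexp_Max_score_shift_le:
  assumes g: "maximizes_score lam g" "is_classifier Xs K g" and s: "s \<in> {-1,1}"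
  shows "cexp_S M S s (\<lambda>\<omega>. Max ((\<lambda>k. score (lam(k0 := lam k0 + t)) s k (X \<omega>)) ` {1..K}))
    \<le> cexp_S M S s (\<lambda>\<omega>. score lam s (g (X \<omega>) s) (X \<omega>)) - real_of_int s * t * share g s k0
      + \<bar>t\<bar> * prob (near_tie lam s \<bar>t\<bar>) / pi_s M S s"
proof -
  let ?f = "\<lambda>\<omega>. score lam s (g (X \<omega>) s) (X \<omega>)"
  let ?u = "\<lambda>\<omega>. (- real_of_int s * t) * indicator (assigned g s k0) \<omega>"
  let ?v = "\<lambda>\<omega>. \<bar>t\<bar> * indicator (near_tie lam s \<bar>t\<bar>) \<omega>"
  have f: "integrable M ?f"
    using integrable_score_classifier[OF g(2) s] .
  have u: "integrable M ?u"
    using integrable_indicator_events[OF sets_assigned[OF g(2) s]] by (rule integrable_mult_right)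
  have v: "integrable M ?v"
    using integrable_indicator_events[OF sets_near_tie[OF s]] by (rule integrable_mult_right)
  have "cexp_S M S s (\<lambda>\<omega>. Max ((\<lambda>k. score (lam(k0 := lam k0 + t)) s k (X \<omega>)) ` {1..K}))
      \<le> cexp_S M S s (\<lambda>\<omega>. ?f \<omega> + ?u \<omega> + ?v \<omega>)"
    using integrable_Max_score[OF s] Bochner_Integration.integrable_add[OF Bochner_Integration.integrable_add[OF f u] v]
      Max_score_shift_le[OF g s]
    by (rule cexp_S_mono[OF s])
  also have "\<dots> = cexp_S M S s ?f + cexp_S M S s ?u + cexp_S M S s ?v"
    unfolding cexp_S_add[OF Bochner_Integration.integrable_add[OF f u] v] cexp_S_add[OF f u] ..
  also have "\<dots> = cexp_S M S s ?f - real_of_int s * t * share g s k0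
      + \<bar>t\<bar> * prob (near_tie lam s \<bar>t\<bar>) / pi_s M S s"
    unfolding cexp_S_scaled_indicator[OF sets_assigned[OF g(2) s] assigned_subset_stratum]
      cexp_S_scaled_indicator[OF sets_near_tie[OF s] near_tie_subset_stratum]
    by (simp add: share_def)
  finally show ?thesis .
qed

lemma fair_objective_shift_le:
  assumes g: "maximizes_score lam g" "is_classifier Xs K g"
  shows "fair_objective M X S K p (lam(k0 := lam k0 + t))
    \<le> fair_objective M X S K p lam - t * (share g 1 k0 - share g (-1) k0)
      + \<bar>t\<bar> * (\<Sum>s\<in>{-1,1}. prob (near_tie lam s \<bar>t\<bar>) / pi_s M S s)"
proof -
  have "fair_objective M X S K p (lam(k0 := lam k0 + t)) = (\<Sum>s\<in>{-1,1}. cexp_S M S s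
      (\<lambda>\<omega>. Max ((\<lambda>k. score (lam(k0 := lam k0 + t)) s k (X \<omega>)) ` {1..K})))"
    by (simp add: fair_objective_def score_def)
  also have "\<dots> \<le> (\<Sum>s\<in>{-1,1}. cexp_S M S s (\<lambda>\<omega>. score lam s (g (X \<omega>) s) (X \<omega>))
      - real_of_int s * t * share g s k0 + \<bar>t\<bar> * prob (near_tie lam s \<bar>t\<bar>) / pi_s M S s)"
    using cexp_Max_score_shift_le[OF g] by (intro sum_mono) auto
  also have "\<dots> = fair_objective M X S K p lam - t * (share g 1 k0 - share g (-1) k0)
      + \<bar>t\<bar> * (\<Sum>s\<in>{-1,1}. prob (near_tie lam s \<bar>t\<bar>) / pi_s M S s)"
    by (simp add: fair_objective_eq_classifier[OF g] algebra_simps)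
  finally show ?thesis .
qed

lemma exactly_fair_if_minimizer:
  assumes cont: "\<forall>k\<in>{1..K}. \<forall>j\<in>{1..K}. k \<noteq> j \<longrightarrow> (\<forall>s\<in>{-1,1}.
      continuous_on UNIV (\<lambda>t. cprob_S M S s (\<lambda>\<omega>. p k (X \<omega>) (S \<omega>) - p j (X \<omega>) (S \<omega>) \<le> t)))"
    and lam_min: "\<forall>l. fair_objective M X S K p lam \<le> fair_objective M X S K p l"
    and g: "maximizes_score lam g" "is_classifier Xs K g"
  shows "exactly_fair M X S K g"
  unfolding exactly_fair_iff_share
proof
  fix k0 assume "k0 \<in> {1..K}"
  define D where "D = share g 1 k0 - share g (-1) k0"
  define m where "m r = (\<Sum>s\<in>{-1,1}. prob (near_tie lam s r) / pi_s M S s)" for r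
  have shift: "t * D \<le> \<bar>t\<bar> * m \<bar>t\<bar>" for t
    using lam_min[rule_format, of "lam(k0 := lam k0 + t)"] fair_objective_shift_le[OF g, of k0 t]
    unfolding D_def m_def by linarith
  have bound: "\<bar>D\<bar> \<le> m r" if r: "r > 0" for r
  proof -
    have "r * D \<le> r * m r" "r * (- D) \<le> r * m r"
      using shift[of r] shift[of "- r"] r by simp_all
    then have "D \<le> m r" "- D \<le> m r"
      using mult_left_le_imp_le r by blast+
    then show ?thesis
      by (simp add: abs_le_iff)
  qed
  have "(m \<longlongrightarrow> 0) (at_right 0)"
    unfolding m_def
  proof (rule tendsto_null_sum)
    fix s :: int assume s: "s \<in> {-1,1}"
    with cont have "((\<lambda>r. prob (near_tie lam s r)) \<longlongrightarrow> 0) (at_right 0)"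
      by (intro near_tie_tendsto_0) blast+
    then show "((\<lambda>r. prob (near_tie lam s r) / pi_s M S s) \<longlongrightarrow> 0) (at_right 0)"
      by (rule tendsto_divide_zero)
  qed
  moreover have "\<forall>\<^sub>F r in at_right 0. \<bar>D\<bar> \<le> m r"
    using eventually_at_right_less[of "0::real"] by eventually_elim (rule bound)
  ultimately have "\<bar>D\<bar> \<le> 0"
    by (rule tendsto_lowerbound) simp
  then show "share g 1 k0 = share g (-1) k0"
    by (simp add: D_def)
qed

end

theorem corollary1:
  fixes M :: "'a measure" and X :: "'a \<Rightarrow> real^'d" and S :: "'a \<Rightarrow> int" and Y :: "'a \<Rightarrow> nat"
    and Xs :: "(real^'d) set" and K :: nat
    and p :: "nat \<Rightarrow> real^'d \<Rightarrow> int \<Rightarrow> real"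
    and lam_star :: "nat \<Rightarrow> real" and g :: "real^'d \<Rightarrow> int \<Rightarrow> nat"
  assumes M: "prob_space M"
    and K: "K \<ge> 1"
    and X_meas: "X \<in> borel_measurable M"
    and S_meas: "S \<in> M \<rightarrow>\<^sub>M count_space UNIV"
    and Y_meas: "Y \<in> M \<rightarrow>\<^sub>M count_space UNIV"
    and X_range: "\<forall>\<omega>\<in>space M. X \<omega> \<in> Xs"
    and S_range: "\<forall>\<omega>\<in>space M. S \<omega> \<in> {-1, 1}"
    and Y_range: "\<forall>\<omega>\<in>space M. Y \<omega> \<in> {1..K}"
    and pi_pos: "\<forall>s\<in>{-1,1}. pi_s M S s > 0"
    and p_version: "is_cond_prob_version M X S Y K p"
    and continuity: "\<forall>k\<in>{1..K}. \<forall>j\<in>{1..K}. k \<noteq> j \<longrightarrow> (\<forall>s\<in>{-1,1}.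
        continuous_on UNIV (\<lambda>t. cprob_S M S s (\<lambda>\<omega>. p k (X \<omega>) (S \<omega>) - p j (X \<omega>) (S \<omega>) \<le> t)))"
    and lam_min: "\<forall>lam. fair_objective M X S K p lam_star \<le> fair_objective M X S K p lam"
    and g_class: "is_classifier Xs K g"
    and g_argmax: "\<forall>x\<in>Xs. \<forall>s\<in>{-1,1}. \<forall>k\<in>{1..K}.
        pi_s M S s * p k x s - real_of_int s * lam_star k
          \<le> pi_s M S s * p (g x s) x s - real_of_int s * lam_star (g x s)"
  shows "exactly_fair M X S K g \<and>
         (\<forall>g'. is_classifier Xs K g' \<and> exactly_fair M X S K g' \<longrightarrow> risk M X S Y g \<le> risk M X S Y g')"
proof -
  interpret fair_classification M X S Y Xs K p
    by (intro fair_classification.intro fair_classification_axioms.intro M K X_meas S_meas Y_meas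
        X_range S_range Y_range pi_pos p_version)
  have g_max: "maximizes_score lam_star g"
    using g_argmax by (simp add: maximizes_score_def score_def)
  have fair: "exactly_fair M X S K g"
    using exactly_fair_if_minimizer[OF continuity lam_min g_max g_class] .
  show ?thesis
    using fair risk_le_if_maximizes_score[OF g_class fair g_max] by auto
qed

end
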